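(* Every cograph admits a canonical dominating set.
   Context: All graphs are finite, simple and undirected. The union $G_1\cup G_2$ of two vertex-disjoint graphs has vertex set $V(G_1)\cup V(G_2)$ and edge set $E(G_1)\cup E(G_2)$; the join $G_1\vee G_2$ additionally contains all edges $vw$ with $v\in V(G_1)$, $w\in V(G_2)$. Cographs are defined recursively: a single vertex is a cograph, and the union and the join of two cographs are cographs. A set $D\subseteq V(G)$ is a dominating set if every vertex of $G$ is in $D$ or adjacent to a vertex of $D$. Two dominating sets $D,D'$ are adjacent if $|D\triangle D'|=1$. For dominating sets $D_p,D_q$ and an integer $k>0$, write $D_p\leftrightarrow_k D_q$ if there is a sequence $D_0=D_p,\dots,D_\ell=D_q$ ($\ell\ge0$) of dominating sets of $G$ with consecutive sets adjacent and $|D_i|\le k$ for all $i$. A minimum dominating set $D^*$ of $G$ is canonical if $D\leftrightarrow_{|D|+1} D^*$ for every dominating set $D$ of $G$. *)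

theory Defs
  imports Main
begin

text \<open>A (simple, undirected) graph is a pair (V, E) with E a set of 2-element subsets of V.\<close>

definition join_edges :: "'a set \<Rightarrow> 'a set \<Rightarrow> 'a set set" where
  "join_edges V1 V2 = {{v, w} | v w. v \<in> V1 \<and> w \<in> V2}"

inductive cograph :: "'a set \<Rightarrow> 'a set set \<Rightarrow> bool" where
  single: "cograph {v} {}"
| union: "\<lbrakk>cograph V1 E1; cograph V2 E2; V1 \<inter> V2 = {}\<rbrakk>
           \<Longrightarrow> cograph (V1 \<union> V2) (E1 \<union> E2)"
| join: "\<lbrakk>cograph V1 E1; cograph V2 E2; V1 \<inter> V2 = {}\<rbrakk>
           \<Longrightarrow> cograph (V1 \<union> V2) (E1 \<union> E2 \<union> join_edges V1 V2)"

definition dominating :: "'a set \<Rightarrow> 'a set set \<Rightarrow> 'a set \<Rightarrow> bool" where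
  "dominating V E D \<longleftrightarrow> D \<subseteq> V \<and> (\<forall>v\<in>V. v \<in> D \<or> (\<exists>u\<in>D. {u, v} \<in> E))"

definition min_dominating :: "'a set \<Rightarrow> 'a set set \<Rightarrow> 'a set \<Rightarrow> bool" where
  "min_dominating V E D \<longleftrightarrow> dominating V E D \<and>
     (\<forall>D'. dominating V E D' \<longrightarrow> card D \<le> card D')"

definition symdiff :: "'a set \<Rightarrow> 'a set \<Rightarrow> 'a set" where
  "symdiff A B = (A - B) \<union> (B - A)"

definition reconf :: "'a set \<Rightarrow> 'a set set \<Rightarrow> nat \<Rightarrow> 'a set \<Rightarrow> 'a set \<Rightarrow> bool" where
  "reconf V E k Dp Dq \<longleftrightarrow> (\<exists>xs. xs \<noteq> [] \<and> hd xs = Dp \<and> last xs = Dq \<and>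
     (\<forall>D\<in>set xs. dominating V E D \<and> card D \<le> k) \<and>
     (\<forall>i. Suc i < length xs \<longrightarrow> card (symdiff (xs ! i) (xs ! Suc i)) = 1))"

definition canonical :: "'a set \<Rightarrow> 'a set set \<Rightarrow> 'a set \<Rightarrow> bool" where
  "canonical V E Ds \<longleftrightarrow> min_dominating V E Ds \<and>
     (\<forall>D. dominating V E D \<longrightarrow> reconf V E (card D + 1) D Ds)"

end

theory Submission
  imports Defs
begin

text \<open>Any two dominating sets D and T are connected through dominating sets of size
  at most |D \<union> T|: add the vertices of T one by one, then delete those of D. For a disjoint union,
  reconfigure each side separately while the other side is kept fixed. For a join, either some
  vertex dominates everything, or every dominating set has at least two vertices, and then any
  pair {u, w} with one vertex on each side is canonical: a set D containing a vertex a \<in> V1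
  reaches {a, w} via D \<union> {w} and then {u, w} via {a, u, w} (symmetrically if a \<in> V2).\<close>

inductive reconf_chain :: "'a set \<Rightarrow> 'a set set \<Rightarrow> nat \<Rightarrow> 'a set \<Rightarrow> 'a set \<Rightarrow> bool"
  for V E k where
  chain_refl: "dominating V E A \<Longrightarrow> card A \<le> k \<Longrightarrow> reconf_chain V E k A A"
| chain_step: "dominating V E A \<Longrightarrow> card A \<le> k \<Longrightarrow> card (symdiff A B) = 1 \<Longrightarrow>
    reconf_chain V E k B C \<Longrightarrow> reconf_chain V E k A C"

lemma reconf_chain_dominating:
  "reconf_chain V E k A B \<Longrightarrow> dominating V E A \<and> card A \<le> k \<and> dominating V E B \<and> card B \<le> k"
  by (induction rule: reconf_chain.induct) auto

lemma reconf_chain_imp_reconf: "reconf_chain V E k A B \<Longrightarrow> reconf V E k A B"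
proof (induction rule: reconf_chain.induct)
  case (chain_refl A)
  then show ?case unfolding reconf_def by (intro exI[of _ "[A]"]) auto
next
  case (chain_step A B C)
  then obtain xs where xs: "xs \<noteq> []" "hd xs = B" "last xs = C"
      "\<forall>D\<in>set xs. dominating V E D \<and> card D \<le> k"
      "\<forall>i. Suc i < length xs \<longrightarrow> card (symdiff (xs ! i) (xs ! Suc i)) = 1"
    unfolding reconf_def by blast
  have "\<forall>i. Suc i < length (A # xs) \<longrightarrow> card (symdiff ((A # xs) ! i) ((A # xs) ! Suc i)) = 1"
  proof (intro allI impI)
    fix i assume "Suc i < length (A # xs)"
    then show "card (symdiff ((A # xs) ! i) ((A # xs) ! Suc i)) = 1"
      using xs chain_step.hyps(3) by (cases i) (auto simp: hd_conv_nth)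
  qed
  then show ?case
    unfolding reconf_def using xs chain_step.hyps by (intro exI[of _ "A # xs"]) auto
qed

lemma reconf_chain_of_list:
  assumes "xs \<noteq> []" "\<forall>D\<in>set xs. dominating V E D \<and> card D \<le> k"
    "\<forall>i. Suc i < length xs \<longrightarrow> card (symdiff (xs ! i) (xs ! Suc i)) = 1"
  shows "reconf_chain V E k (hd xs) (last xs)"
  using assms
proof (induction xs)
  case Nil
  then show ?case by simp
next
  case (Cons A xs)
  show ?case
  proof (cases "xs = []")
    case True
    then show ?thesis using Cons.prems by (auto intro: chain_refl)
  next
    case False
    have "reconf_chain V E k (hd xs) (last xs)"
      using Cons.IH False Cons.prems(2) Cons.prems(3)[rule_format, of "Suc _"] by auto
    moreover have "card (symdiff A (hd xs)) = 1"
      using Cons.prems(3)[rule_format, of 0] False by (simp add: hd_conv_nth)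
    ultimately show ?thesis using Cons.prems False by (auto intro: chain_step)
  qed
qed

lemma reconf_iff_reconf_chain: "reconf V E k A B \<longleftrightarrow> reconf_chain V E k A B"
  using reconf_chain_imp_reconf reconf_chain_of_list unfolding reconf_def by metis

lemma reconf_chain_trans:
  "reconf_chain V E k A B \<Longrightarrow> reconf_chain V E k B C \<Longrightarrow> reconf_chain V E k A C"
  by (induction rule: reconf_chain.induct) (auto intro: chain_step)

lemma reconf_chain_single_step:
  assumes "dominating V E A" "card A \<le> k" "dominating V E B" "card B \<le> k"
    "card (symdiff A B) = 1"
  shows "reconf_chain V E k A B"
  using assms by (blast intro: chain_step chain_refl)

lemma reconf_chain_sym: "reconf_chain V E k A B \<Longrightarrow> reconf_chain V E k B A"
proof (induction rule: reconf_chain.induct)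
  case (chain_refl A)
  then show ?case by (rule reconf_chain.chain_refl)
next
  case (chain_step A B C)
  have "card (symdiff B A) = 1"
    using chain_step.hyps(3) by (simp add: symdiff_def Un_commute)
  then have "reconf_chain V E k B A"
    using chain_step reconf_chain_dominating by (blast intro: reconf_chain_single_step)
  then show ?case using chain_step.IH reconf_chain_trans by blast
qed

lemma reconf_chain_mono:
  "reconf_chain V E k A B \<Longrightarrow> k \<le> k' \<Longrightarrow> reconf_chain V E k' A B"
  by (induction rule: reconf_chain.induct) (auto intro: chain_step chain_refl)

lemma reconf_chain_add_vertices:
  assumes "finite V" "finite F" "dominating V E A" "F \<subseteq> V" "card (A \<union> F) \<le> k"
  shows "reconf_chain V E k A (A \<union> F)"
  using assms(2-5)
proof (induction F rule: finite_induct)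
  case empty
  then show ?case by (auto intro: chain_refl)
next
  case (insert x F)
  have "card (A \<union> F) \<le> card (A \<union> insert x F)"
    using insert.prems(1,2) assms(1) finite_subset unfolding dominating_def
    by (intro card_mono) auto
  then have chain_F: "reconf_chain V E k A (A \<union> F)"
    using insert by auto
  show ?case
  proof (cases "x \<in> A \<union> F")
    case True
    then show ?thesis using chain_F by (simp add: insert_absorb)
  next
    case False
    have "symdiff (A \<union> F) (A \<union> insert x F) = {x}"
      using False unfolding symdiff_def by blast
    moreover have "dominating V E (A \<union> F)" "dominating V E (A \<union> insert x F)"
      using insert.prems(1,2) unfolding dominating_def by blast+
    ultimately have "reconf_chain V E k (A \<union> F) (A \<union> insert x F)"
      using \<open>card (A \<union> F) \<le> card (A \<union> insert x F)\<close> insert.prems(3)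
      by (intro reconf_chain_single_step) auto
    then show ?thesis using reconf_chain_trans[OF chain_F] by blast
  qed
qed

lemma reconf_chain_via_Un:
  assumes "finite V" "dominating V E D" "dominating V E T" "card (D \<union> T) \<le> k"
  shows "reconf_chain V E k D T"
proof -
  have sub: "D \<subseteq> V" "T \<subseteq> V" using assms(2,3) unfolding dominating_def by auto
  then have "finite D" "finite T" using assms(1) finite_subset by auto
  have "reconf_chain V E k D (D \<union> T)"
    using reconf_chain_add_vertices[OF assms(1) \<open>finite T\<close> assms(2) sub(2) assms(4)] .
  moreover have "reconf_chain V E k T (D \<union> T)"
    using reconf_chain_add_vertices[OF assms(1) \<open>finite D\<close> assms(3) sub(1)] assms(4)
    by (simp add: Un_commute)
  ultimately show ?thesis using reconf_chain_sym reconf_chain_trans by blast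
qed

lemma dominating_Un:
  "dominating V1 E1 D1 \<Longrightarrow> dominating V2 E2 D2 \<Longrightarrow>
    dominating (V1 \<union> V2) (E1 \<union> E2) (D1 \<union> D2)"
  unfolding dominating_def by blast

lemma dominating_restrict:
  assumes "dominating (V1 \<union> V2) (E1 \<union> E2) D" "\<forall>e\<in>E1. e \<subseteq> V1" "\<forall>e\<in>E2. e \<subseteq> V2"
    "V1 \<inter> V2 = {}"
  shows "dominating V1 E1 (D \<inter> V1)"
  unfolding dominating_def
proof (intro conjI ballI)
  fix v assume v: "v \<in> V1"
  then consider "v \<in> D" | u where "u \<in> D" "{u, v} \<in> E1 \<union> E2"
    using assms(1) unfolding dominating_def by blast
  then show "v \<in> D \<inter> V1 \<or> (\<exists>u\<in>D \<inter> V1. {u, v} \<in> E1)"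
  proof cases
    case (2 u)
    then have "{u, v} \<in> E1" using assms(3,4) v by blast
    then show ?thesis using assms(2) \<open>u \<in> D\<close> by blast
  qed (use v in blast)
qed auto

lemma cograph_finite: "cograph V E \<Longrightarrow> finite V"
  by (induction rule: cograph.induct) auto

lemma cograph_nonempty: "cograph V E \<Longrightarrow> V \<noteq> {}"
  by (induction rule: cograph.induct) auto

lemma cograph_edges_subset: "cograph V E \<Longrightarrow> \<forall>e\<in>E. e \<subseteq> V"
  by (induction rule: cograph.induct) (auto simp: join_edges_def)

lemma card_dominating_pos:
  "finite V \<Longrightarrow> V \<noteq> {} \<Longrightarrow> dominating V E D \<Longrightarrow> 0 < card D"
  unfolding dominating_def by (auto simp: card_gt_0_iff intro: finite_subset)

lemma canonical_singleton:
  assumes "finite V" "V \<noteq> {}" "dominating V E {v}"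
  shows "canonical V E {v}"
  unfolding canonical_def min_dominating_def
proof (intro conjI allI impI)
  fix D assume D: "dominating V E D"
  then show "card {v} \<le> card D" using card_dominating_pos[OF assms(1,2)] by fastforce
  have "finite D" using D assms(1) finite_subset unfolding dominating_def by blast
  then have "card (D \<union> {v}) \<le> card D + 1" by (simp add: card_insert_if)
  then show "reconf V E (card D + 1) D {v}"
    using reconf_chain_via_Un[OF assms(1) D assms(3)] by (simp add: reconf_iff_reconf_chain)
qed (rule assms(3))

lemma reconf_chain_Un_fixed:
  assumes "reconf_chain V1 E1 k X Y" "dominating V2 E2 Z" "V1 \<inter> V2 = {}"
  shows "reconf_chain (V1 \<union> V2) (E1 \<union> E2) (k + card Z) (X \<union> Z) (Y \<union> Z)"
  using assms(1)
proof induction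
  case (chain_refl A)
  have "card (A \<union> Z) \<le> k + card Z"
    using card_Un_le[of A Z] chain_refl.hyps(2) by linarith
  then show ?case
    using dominating_Un[OF chain_refl.hyps(1) assms(2)] by (simp add: reconf_chain.chain_refl)
next
  case (chain_step A B C)
  have "A \<subseteq> V1" "B \<subseteq> V1" "Z \<subseteq> V2"
    using chain_step.hyps(1) reconf_chain_dominating[OF chain_step.hyps(4)] assms(2)
    unfolding dominating_def by auto
  then have "symdiff (A \<union> Z) (B \<union> Z) = symdiff A B"
    using assms(3) unfolding symdiff_def by blast
  moreover have "card (A \<union> Z) \<le> k + card Z"
    using card_Un_le[of A Z] chain_step.hyps(2) by linarith
  ultimately show ?case
    using chain_step.hyps(3) chain_step.IH dominating_Un[OF chain_step.hyps(1) assms(2)]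
    by (metis reconf_chain.chain_step)
qed

lemma canonical_Un:
  assumes "finite V1" "finite V2" "V1 \<inter> V2 = {}" "\<forall>e\<in>E1. e \<subseteq> V1" "\<forall>e\<in>E2. e \<subseteq> V2"
    and S1: "canonical V1 E1 S1" and S2: "canonical V2 E2 S2"
  shows "canonical (V1 \<union> V2) (E1 \<union> E2) (S1 \<union> S2)"
  unfolding canonical_def min_dominating_def
proof (intro conjI allI impI)
  have dom1: "dominating V1 E1 S1" and dom2: "dominating V2 E2 S2"
    using S1 S2 unfolding canonical_def min_dominating_def by auto
  then show "dominating (V1 \<union> V2) (E1 \<union> E2) (S1 \<union> S2)" by (rule dominating_Un)
  fix D assume D: "dominating (V1 \<union> V2) (E1 \<union> E2) D"
  define D1 D2 where "D1 = D \<inter> V1" and "D2 = D \<inter> V2"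
  have D1: "dominating V1 E1 D1"
    unfolding D1_def using dominating_restrict[OF D assms(4,5,3)] .
  have D2: "dominating V2 E2 D2"
    unfolding D2_def using dominating_restrict[of V2 V1 E2 E1 D] D assms(3-5)
    by (simp add: Un_commute Int_commute)
  have split: "D = D1 \<union> D2" using D unfolding D1_def D2_def dominating_def by blast
  have "finite D" using D assms(1,2) finite_subset unfolding dominating_def by blast
  moreover have "D1 \<inter> D2 = {}" using assms(3) unfolding D1_def D2_def by blast
  ultimately have card_D: "card D = card D1 + card D2"
    using split card_Un_disjoint[of D1 D2] by simp
  have min1: "card S1 \<le> card D1" and min2: "card S2 \<le> card D2"
    using S1 S2 D1 D2 unfolding canonical_def min_dominating_def by auto
  then show "card (S1 \<union> S2) \<le> card D" using card_Un_le[of S1 S2] card_D by linarith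
  have "reconf_chain V1 E1 (card D1 + 1) D1 S1"
    using S1 D1 unfolding canonical_def reconf_iff_reconf_chain by blast
  from reconf_chain_Un_fixed[OF this D2 assms(3)]
  have first: "reconf_chain (V1 \<union> V2) (E1 \<union> E2) (card D + 1) D (S1 \<union> D2)"
    using split card_D by (simp add: algebra_simps)
  have "reconf_chain V2 E2 (card D2 + 1) D2 S2"
    using S2 D2 unfolding canonical_def reconf_iff_reconf_chain by blast
  from reconf_chain_Un_fixed[OF this dom1] assms(3)
  have "reconf_chain (V1 \<union> V2) (E1 \<union> E2) (card D2 + 1 + card S1) (S1 \<union> D2) (S1 \<union> S2)"
    by (simp add: Un_commute Int_commute)
  then have second: "reconf_chain (V1 \<union> V2) (E1 \<union> E2) (card D + 1) (S1 \<union> D2) (S1 \<union> S2)"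
    using reconf_chain_mono min1 card_D by fastforce
  show "reconf (V1 \<union> V2) (E1 \<union> E2) (card D + 1) D (S1 \<union> S2)"
    using reconf_chain_trans[OF first second] by (simp add: reconf_iff_reconf_chain)
qed

lemma dominating_join_pair:
  assumes "a \<in> V1" "b \<in> V2"
  shows "dominating (V1 \<union> V2) (E1 \<union> E2 \<union> join_edges V1 V2) {a, b}"
  unfolding dominating_def
proof (intro conjI ballI)
  fix x assume "x \<in> V1 \<union> V2"
  then have "{b, x} \<in> join_edges V1 V2 \<or> {a, x} \<in> join_edges V1 V2"
    using assms unfolding join_edges_def by (auto simp: insert_commute)
  then show "x \<in> {a, b} \<or> (\<exists>u\<in>{a, b}. {u, x} \<in> E1 \<union> E2 \<union> join_edges V1 V2)"
    by blast
qed (use assms in auto)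

lemma two_le_card_dominating:
  assumes "finite V" "V \<noteq> {}" "\<forall>v. \<not> dominating V E {v}" "dominating V E D"
  shows "2 \<le> card D"
proof -
  have "card D \<noteq> 1" using assms(3,4) by (auto simp: card_1_singleton_iff)
  then show ?thesis using card_dominating_pos[OF assms(1,2,4)] by linarith
qed

lemma canonical_join_pair:
  fixes V1 V2 :: "'a set" and E1 E2 :: "'a set set"
  defines "V \<equiv> V1 \<union> V2" and "E \<equiv> E1 \<union> E2 \<union> join_edges V1 V2"
  assumes "finite V1" "finite V2" "V1 \<inter> V2 = {}" "u \<in> V1" "w \<in> V2"
    and no_universal: "\<forall>v. \<not> dominating V E {v}"
  shows "canonical V E {u, w}"
  unfolding canonical_def min_dominating_def
proof (intro conjI allI impI)
  have "finite V" "V \<noteq> {}" using assms(3-6) unfolding V_def by auto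
  have uw: "dominating V E {u, w}"
    unfolding V_def E_def by (rule dominating_join_pair[OF assms(6,7)])
  then show "dominating V E {u, w}" .
  fix D assume D: "dominating V E D"
  have two: "2 \<le> card D"
    using two_le_card_dominating[OF \<open>finite V\<close> \<open>V \<noteq> {}\<close> no_universal D] .
  then show "card {u, w} \<le> card D" by (simp add: card_insert_if)
  have "finite D" using D \<open>finite V\<close> finite_subset unfolding dominating_def by blast
  have "D \<subseteq> V" using D unfolding dominating_def by blast
  moreover obtain a where "a \<in> D" using two by (cases "D = {}") auto
  ultimately have "a \<in> V" by blast
  obtain P where P: "dominating V E P" "card (D \<union> P) \<le> card D + 1" "card (P \<union> {u, w}) \<le> 3"
  proof (cases "a \<in> V1")
    case True
    have "dominating V E {a, w}"
      unfolding V_def E_def by (rule dominating_join_pair[OF True assms(7)])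
    moreover have "D \<union> {a, w} = insert w D" using \<open>a \<in> D\<close> by blast
    ultimately show ?thesis
      using that \<open>finite D\<close> by (simp add: card_insert_if insert_commute)
  next
    case False
    then have "a \<in> V2" using \<open>a \<in> V\<close> unfolding V_def by blast
    then have "dominating V E {u, a}"
      unfolding V_def E_def by (rule dominating_join_pair[OF assms(6)])
    moreover have "D \<union> {u, a} = insert u D" using \<open>a \<in> D\<close> by blast
    ultimately show ?thesis
      using that \<open>finite D\<close> by (simp add: card_insert_if insert_commute)
  qed
  have "reconf_chain V E (card D + 1) D P"
    using reconf_chain_via_Un[OF \<open>finite V\<close> D P(1) P(2)] .
  moreover have "reconf_chain V E (card D + 1) P {u, w}"
    using reconf_chain_via_Un[OF \<open>finite V\<close> P(1) uw] P(3) two by simp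
  ultimately have "reconf_chain V E (card D + 1) D {u, w}"
    by (rule reconf_chain_trans)
  then show "reconf V E (card D + 1) D {u, w}"
    by (simp add: reconf_iff_reconf_chain)
qed

lemma canonical_join_exists:
  assumes "finite V1" "finite V2" "V1 \<inter> V2 = {}" "V1 \<noteq> {}" "V2 \<noteq> {}"
  shows "\<exists>Ds. canonical (V1 \<union> V2) (E1 \<union> E2 \<union> join_edges V1 V2) Ds"
proof (cases "\<exists>v. dominating (V1 \<union> V2) (E1 \<union> E2 \<union> join_edges V1 V2) {v}")
  case True
  then obtain v where v: "dominating (V1 \<union> V2) (E1 \<union> E2 \<union> join_edges V1 V2) {v}" ..
  have "finite (V1 \<union> V2)" "V1 \<union> V2 \<noteq> {}" using assms(1,2,4) by auto
  from canonical_singleton[OF this v] show ?thesis ..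
next
  case False
  obtain u w where "u \<in> V1" "w \<in> V2" using assms(4,5) by blast
  then have "canonical (V1 \<union> V2) (E1 \<union> E2 \<union> join_edges V1 V2) {u, w}"
    using False by (intro canonical_join_pair[OF assms(1-3)]) auto
  then show ?thesis ..
qed

theorem lemma5:
  fixes V :: "'a set" and E :: "'a set set"
  assumes "cograph V E"
  shows "\<exists>Ds. canonical V E Ds"
  using assms
proof (induction rule: cograph.induct)
  case (single v)
  have "dominating {v} {} {v}" unfolding dominating_def by auto
  from canonical_singleton[OF _ _ this] show ?case by blast
next
  case (union V1 E1 V2 E2)
  then obtain S1 S2 where "canonical V1 E1 S1" "canonical V2 E2 S2" by blast
  from canonical_Un[OF cograph_finite[OF union.hyps(1)] cograph_finite[OF union.hyps(2)]
      union.hyps(3) cograph_edges_subset[OF union.hyps(1)] cograph_edges_subset[OF union.hyps(2)]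
      this]
  show ?case ..
next
  case (join V1 E1 V2 E2)
  show ?case
    using canonical_join_exists[OF cograph_finite[OF join.hyps(1)] cograph_finite[OF join.hyps(2)]
        join.hyps(3) cograph_nonempty[OF join.hyps(1)] cograph_nonempty[OF join.hyps(2)]] .
qed

end
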